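(* Let $0<\alpha<1$ and let $n$ be sufficiently large in terms of $\alpha$. Let $G$ be a graph on $n$ vertices with $e(G)\geq n^{1+\alpha}$. Then $G$ contains a subgraph $G''$ on $m\geq n^{\alpha\frac{1-\alpha}{1+\alpha}}$ vertices such that $e(G'')\geq \frac13 m^{1+\alpha}$ and $\Delta(G'')\leq Km^{\alpha}$, where $K=10\cdot 2^{1/\alpha^2+1}$.
   Context: $e(G)$ is the number of edges and $\Delta(G)$ the maximum degree of $G$. *)

theory Defs
  imports Complex_Main
begin

definition simple_graph :: "'a set \<Rightarrow> 'a set set \<Rightarrow> bool" where
  "simple_graph V E \<longleftrightarrow> finite V \<and> (\<forall>e\<in>E. e \<subseteq> V \<and> card e = 2)"

definition degree :: "'a set set \<Rightarrow> 'a \<Rightarrow> nat" where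
  "degree E v = card {e\<in>E. v \<in> e}"

definition max_degree :: "'a set \<Rightarrow> 'a set set \<Rightarrow> nat" where
  "max_degree V E = Max (insert 0 (degree E ` V))"

definition subgraph :: "'a set \<Rightarrow> 'a set set \<Rightarrow> 'a set \<Rightarrow> 'a set set \<Rightarrow> bool" where
  "subgraph V' E' V E \<longleftrightarrow> V' \<subseteq> V \<and> E' \<subseteq> E \<and> (\<forall>e\<in>E'. e \<subseteq> V')"

end

theory Submission
  imports Defs
begin

(* Induction on the number of vertices, carrying the density invariant
   e(G) >= c |V|^(1+t) together with c >= |V|^(alpha-t), where t = 2 alpha^2 / (1 + alpha^2)
   and initially c = n^(alpha-t).  Cap degrees at D = (4/3) L |V|^alpha with
   L = 15 * 2^(1/alpha^2) and take a maximal subgraph F' of maximum degree at most D.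
   If F' has at least |V|^(1+alpha)/3 edges it is the required subgraph, and e(G) <= |V|^2
   gives |V| >= c^(1/(1-t)).  Otherwise the set S of vertices whose F'-degree is within 1 of D
   satisfies L |S| < |V| by the handshake lemma, and every edge outside F' meets S.  Hence a
   third of all edges lie inside S, or a third cross from S to its complement; in the latter
   case averaging picks 3|S| outside vertices which together with S span at least a |S|/|V|
   share of the crossing edges.  Either way the invariant holds on at most 4|S| < |V|
   vertices, the case 4|S| being exactly where L^t >= 4^(1+t) is needed. *)

section \<open>Degrees and edge counting\<close>

lemma finite_edges:
  assumes "finite V" "\<forall>e\<in>E. e \<subseteq> V"
  shows "finite E"
  using assms finite_subset[of E "Pow V"] by auto

lemma sum_degree_eq_sum_card_Int:
  assumes "finite A" "finite E"
  shows "(\<Sum>a\<in>A. degree E a) = (\<Sum>e\<in>E. card (A \<inter> e))"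
proof -
  have "(\<Sum>a\<in>A. degree E a) = (\<Sum>a\<in>A. \<Sum>e\<in>E. if a \<in> e then 1 else 0)"
    using sum.inter_filter[OF assms(2), of "\<lambda>_. 1::nat"] by (simp add: degree_def)
  also have "\<dots> = (\<Sum>e\<in>E. \<Sum>a\<in>A. if a \<in> e then 1 else 0)"
    by (rule sum.swap)
  also have "\<dots> = (\<Sum>e\<in>E. card (A \<inter> e))"
    using sum.inter_filter[OF assms(1), of "\<lambda>_. 1::nat"] by (simp add: Int_def)
  finally show ?thesis .
qed

lemma handshake:
  assumes "finite V" "\<forall>e\<in>E. e \<subseteq> V \<and> card e = 2"
  shows "(\<Sum>v\<in>V. degree E v) = 2 * card E"
proof -
  have "finite E"
    using assms by (intro finite_edges) auto
  then have "(\<Sum>v\<in>V. degree E v) = (\<Sum>e\<in>E. card (V \<inter> e))"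
    by (rule sum_degree_eq_sum_card_Int[OF assms(1)])
  also have "\<dots> = (\<Sum>e\<in>E. 2)"
    using assms(2) by (intro sum.cong) (auto simp: Int_absorb1)
  finally show ?thesis by simp
qed

lemma degree_insert:
  assumes "finite E" "e \<notin> E"
  shows "degree (insert e E) v = degree E v + (if v \<in> e then 1 else 0)"
proof -
  have "{x \<in> insert e E. v \<in> x} = (if v \<in> e then insert e {x \<in> E. v \<in> x} else {x \<in> E. v \<in> x})"
    by auto
  then show ?thesis
    unfolding degree_def using assms by simp
qed

lemma card_edges_le_square:
  assumes "finite V" "\<forall>e\<in>E. e \<subseteq> V \<and> card e = 2"
  shows "card E \<le> card V ^ 2"
proof -
  have "E \<subseteq> (\<lambda>(a, b). {a, b}) ` (V \<times> V)"
    using assms by (fastforce simp: card_2_iff)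
  then have "card E \<le> card (V \<times> V)"
    using assms(1) by (meson card_image_le finite_SigmaI card_mono finite_imageI order_trans)
  then show ?thesis
    by (simp add: card_cartesian_product power2_eq_square)
qed

lemma max_degree_le:
  assumes "finite V" "\<forall>v\<in>V. real (degree E v) \<le> D" "0 \<le> D"
  shows "real (max_degree V E) \<le> D"
proof -
  have "max_degree V E \<in> insert 0 (degree E ` V)"
    unfolding max_degree_def using assms(1) by (intro Max_in) auto
  then show ?thesis using assms by auto
qed

lemma subgraph_trans:
  "subgraph V'' E'' V' E' \<Longrightarrow> subgraph V' E' V E \<Longrightarrow> subgraph V'' E'' V E"
  unfolding subgraph_def by blast

lemma two_le_card_vertices:
  assumes "finite V" "\<forall>e\<in>E. e \<subseteq> V \<and> card e = 2" "E \<noteq> {}"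
  shows "2 \<le> card V"
proof -
  obtain e where "e \<in> E"
    using assms(3) by blast
  then show ?thesis
    using assms(1,2) card_mono by metis
qed

section \<open>Maximal subgraphs of bounded degree\<close>

lemma exists_maximal_degree_bounded_subset:
  assumes "finite E" "0 \<le> D"
  obtains E' where "E' \<subseteq> E" "\<forall>v. real (degree E' v) \<le> D"
    "\<forall>e\<in>E - E'. \<exists>v\<in>e. D < real (degree E' v) + 1"
proof -
  let ?bounded = "{E'. E' \<subseteq> E \<and> (\<forall>v. real (degree E' v) \<le> D)}"
  have "finite ?bounded"
    using assms(1) finite_subset[of ?bounded "Pow E"] by blast
  moreover have "{} \<in> ?bounded"
    using assms(2) by (simp add: degree_def)
  ultimately have "\<exists>E'\<in>?bounded. \<forall>G\<in>?bounded. E' \<subseteq> G \<longrightarrow> E' = G"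
    by (intro finite_has_maximal) auto
  then obtain E' where "E' \<in> ?bounded" and maximal: "\<forall>G\<in>?bounded. E' \<subseteq> G \<longrightarrow> E' = G" ..
  then have sub: "E' \<subseteq> E" and bounded: "\<forall>v. real (degree E' v) \<le> D"
    by auto
  have saturated: "\<exists>v\<in>e. D < real (degree E' v) + 1" if "e \<in> E - E'" for e
  proof -
    have "finite E'" "e \<notin> E'"
      using sub assms(1) finite_subset that by auto
    then have deg: "degree (insert e E') v = degree E' v + (if v \<in> e then 1 else 0)" for v
      by (rule degree_insert)
    have "insert e E' \<subseteq> E"
      using sub that by blast
    moreover have "insert e E' \<notin> ?bounded"
    proof
      assume "insert e E' \<in> ?bounded"
      with maximal have "E' \<subseteq> insert e E' \<longrightarrow> E' = insert e E'"
        by (rule bspec)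
      with \<open>e \<notin> E'\<close> show False
        by blast
    qed
    ultimately obtain v where v: "D < real (degree (insert e E') v)"
      by (auto simp: not_le)
    have "v \<in> e"
    proof (rule ccontr)
      assume "v \<notin> e"
      then have "degree (insert e E') v = degree E' v"
        using deg[of v] by simp
      then show False
        using v bounded[rule_format, of v] by linarith
    qed
    with v show ?thesis
      using deg[of v] by (intro bexI[of _ v]) auto
  qed
  show ?thesis
    by (rule that[OF sub bounded]) (use saturated in blast)
qed

lemma card_high_degree_vertices:
  assumes "finite V" "\<forall>e\<in>E. e \<subseteq> V \<and> card e = 2"
  shows "real (card {v\<in>V. d \<le> real (degree E v)}) * d \<le> 2 * real (card E)"
proof -
  let ?H = "{v\<in>V. d \<le> real (degree E v)}"
  have "real (card ?H) * d = (\<Sum>v\<in>?H. d)"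
    by simp
  also have "\<dots> \<le> (\<Sum>v\<in>?H. real (degree E v))"
    by (intro sum_mono) auto
  also have "\<dots> \<le> (\<Sum>v\<in>V. real (degree E v))"
    using assms(1) by (intro sum_mono2) auto
  also have "\<dots> = 2 * real (card E)"
    using handshake[OF assms] by (metis of_nat_mult of_nat_numeral of_nat_sum)
  finally show ?thesis .
qed

lemma few_saturated_vertices:
  fixes L \<alpha> :: real
  assumes "finite V" "\<forall>e\<in>E. e \<subseteq> V \<and> card e = 2" "V \<noteq> {}" "3 \<le> L" "0 \<le> \<alpha>"
    and sparse: "3 * real (card E) < real (card V) powr (1 + \<alpha>)"
  shows "L * real (card {v\<in>V. 4/3 * L * real (card V) powr \<alpha> - 1 \<le> real (degree E v)}) < real (card V)"
proof -
  let ?v = "real (card V)" and ?D = "4/3 * L * real (card V) powr \<alpha>"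
  let ?s = "real (card {v\<in>V. ?D - 1 \<le> real (degree E v)})"
  have "1 \<le> ?v"
    using assms(1,3) by (simp add: Suc_le_eq card_gt_0_iff)
  then have "1 \<le> ?v powr \<alpha>"
    using assms(5) by (simp add: ge_one_powr_ge_zero)
  then have "4 \<le> ?D"
    using assms(4) mult_mono[of 3 L 1 "?v powr \<alpha>"] by simp
  have "?s * (?D - 1) \<le> 2 * real (card E)"
    by (rule card_high_degree_vertices[OF assms(1,2)])
  moreover have "?s \<le> ?s * (?D - 1)"
    using \<open>4 \<le> ?D\<close> mult_left_mono[of 1 "?D - 1" ?s] by simp
  moreover have "?s * ?D = ?s * (?D - 1) + ?s"
    by (simp add: algebra_simps)
  ultimately have "?s * ?D < 4/3 * ?v powr (1 + \<alpha>)"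
    using sparse by linarith
  moreover have "?s * ?D = (L * ?s) * (4/3 * ?v powr \<alpha>)"
    by (simp add: mult_ac)
  moreover have "4/3 * ?v powr (1 + \<alpha>) = ?v * (4/3 * ?v powr \<alpha>)"
    using \<open>1 \<le> ?v\<close> by (simp add: powr_add)
  ultimately have "(L * ?s) * (4/3 * ?v powr \<alpha>) < ?v * (4/3 * ?v powr \<alpha>)"
    by simp
  then show ?thesis
    using \<open>1 \<le> ?v powr \<alpha>\<close> \<open>1 \<le> ?v\<close> by (subst (asm) mult_less_cancel_right_pos) simp_all
qed

section \<open>Dense subgraphs near the saturated vertices\<close>

lemma exists_subset_card_sum_ge:
  fixes w :: "'a \<Rightarrow> nat"
  assumes "finite R" "k \<le> card R"
  obtains T where "T \<subseteq> R" "card T = k" "k * sum w R \<le> card R * sum w T"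
proof -
  obtain T0 where "T0 \<subseteq> R \<and> card T0 = k"
    using obtain_subset_with_card_n[OF assms(2)] by metis
  moreover have "\<forall>T. T \<subseteq> R \<and> card T = k \<longrightarrow> sum w T < Suc (sum w R)"
    using assms(1) by (auto simp: le_imp_less_Suc sum_mono2)
  ultimately have "\<exists>T. (T \<subseteq> R \<and> card T = k) \<and> (\<forall>T'. T' \<subseteq> R \<and> card T' = k \<longrightarrow> sum w T' \<le> sum w T)"
    by (rule ex_has_greatest_nat)
  then obtain T where T: "T \<subseteq> R" "card T = k"
    and heaviest: "\<And>T'. T' \<subseteq> R \<Longrightarrow> card T' = k \<Longrightarrow> sum w T' \<le> sum w T"
    by auto
  have "finite T"
    using T(1) assms(1) finite_subset by blast
  have exchange: "w y \<le> w x" if "x \<in> T" "y \<in> R - T" for x y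
  proof -
    have "0 < k"
      using T(2) that(1) \<open>finite T\<close> card_gt_0_iff by blast
    then have "card (insert y (T - {x})) = k"
      using T that \<open>finite T\<close> by (simp add: card_insert_if card_Diff_singleton)
    then have "sum w (insert y (T - {x})) \<le> sum w T"
      using T that by (intro heaviest) auto
    moreover have "sum w T = w x + sum w (T - {x})"
      using that \<open>finite T\<close> by (simp add: sum.remove)
    ultimately show ?thesis
      using that \<open>finite T\<close> by simp
  qed
  have "k * sum w (R - T) = (\<Sum>x\<in>T. \<Sum>y\<in>R - T. w y)"
    using T by simp
  also have "\<dots> \<le> (\<Sum>x\<in>T. \<Sum>y\<in>R - T. w x)"
    using exchange by (intro sum_mono) auto
  also have "\<dots> = (card R - k) * sum w T"
    using T \<open>finite T\<close> by (simp add: card_Diff_subset sum_distrib_left)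
  finally have "k * sum w (R - T) \<le> (card R - k) * sum w T" .
  moreover have "sum w R = sum w T + sum w (R - T)"
    using T(1) assms(1) by (simp add: sum.subset_diff)
  ultimately have "k * sum w R \<le> k * sum w T + (card R - k) * sum w T"
    by (simp add: add_mult_distrib2)
  also have "\<dots> = card R * sum w T"
    using assms(2) by (simp add: add_mult_distrib[symmetric])
  finally show ?thesis
    using T that by blast
qed

lemma exists_subset_spanning_many_crossing_edges:
  assumes "finite U" "S \<subseteq> U" "k \<le> card U - card S"
    and crossing: "\<forall>e\<in>C. e \<subseteq> U \<and> card e = 2 \<and> e \<inter> S \<noteq> {} \<and> \<not> e \<subseteq> S"
  obtains T where "T \<subseteq> U - S" "card T = k"
    "k * card C \<le> (card U - card S) * card {e\<in>C. e \<subseteq> S \<union> T}"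
proof -
  let ?R = "U - S"
  have "finite ?R" "finite C"
    using assms(1) crossing by (auto intro: finite_edges)
  have card_R: "card ?R = card U - card S"
    using assms(1,2) by (simp add: card_Diff_subset finite_subset)
  have outer_vertex: "card (?R \<inter> e) = 1" if "e \<in> C" for e
  proof -
    from that crossing obtain a b where "e = {a, b}" "a \<noteq> b" "e \<subseteq> U" "e \<inter> S \<noteq> {}" "\<not> e \<subseteq> S"
      by (metis card_2_iff)
    then show ?thesis
      by (cases "a \<in> S") auto
  qed
  have "sum (degree C) ?R = (\<Sum>e\<in>C. card (?R \<inter> e))"
    by (rule sum_degree_eq_sum_card_Int[OF \<open>finite ?R\<close> \<open>finite C\<close>])
  also have "\<dots> = (\<Sum>e\<in>C. 1)"
    using outer_vertex by (intro sum.cong) auto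
  also have "\<dots> = card C"
    by simp
  finally have sum_R: "sum (degree C) ?R = card C" .
  obtain T where T: "T \<subseteq> ?R" "card T = k" and heavy: "k * sum (degree C) ?R \<le> card ?R * sum (degree C) T"
    using exists_subset_card_sum_ge[OF \<open>finite ?R\<close>] assms(3) card_R by metis
  have "sum (degree C) T = (\<Sum>e\<in>C. card (T \<inter> e))"
    using finite_subset[OF T(1) \<open>finite ?R\<close>] \<open>finite C\<close> by (rule sum_degree_eq_sum_card_Int)
  also have "\<dots> = (\<Sum>e\<in>C. if e \<subseteq> S \<union> T then 1 else 0)"
  proof (rule sum.cong)
    fix e assume "e \<in> C"
    then obtain r where r: "?R \<inter> e = {r}"
      by (rule card_1_singletonE[OF outer_vertex])
    have "e \<subseteq> U"
      using \<open>e \<in> C\<close> crossing by blast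
    show "card (T \<inter> e) = (if e \<subseteq> S \<union> T then 1 else 0)"
    proof (cases "r \<in> T")
      case True
      then have "T \<inter> e = {r}" "e \<subseteq> S \<union> T"
        using r T(1) \<open>e \<subseteq> U\<close> by auto
      then show ?thesis
        by simp
    next
      case False
      then have "T \<inter> e = {}" "\<not> e \<subseteq> S \<union> T"
        using r T(1) by auto
      then show ?thesis
        by simp
    qed
  qed simp
  also have "\<dots> = card {e\<in>C. e \<subseteq> S \<union> T}"
    using sum.inter_filter[OF \<open>finite C\<close>, of "\<lambda>_. 1::nat"] by simp
  finally have "sum (degree C) T = card {e\<in>C. e \<subseteq> S \<union> T}" .
  with heavy sum_R card_R show ?thesis
    by (intro that[OF T]) simp
qed

lemma dense_subgraph_from_crossing_edges:
  assumes "finite U" "S \<subseteq> U" "4 * card S \<le> card U" "C \<subseteq> F" "C \<noteq> {}"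
    and crossing: "\<forall>e\<in>C. e \<subseteq> U \<and> card e = 2 \<and> e \<inter> S \<noteq> {} \<and> \<not> e \<subseteq> S"
  obtains W F\<^sub>2 where "subgraph W F\<^sub>2 U F" "F\<^sub>2 \<noteq> {}" "card W = 4 * card S"
    "3 * card S * card C \<le> card U * card F\<^sub>2"
proof -
  have "finite S"
    using assms(1,2) finite_subset by blast
  moreover obtain e where "e \<in> C"
    using assms(5) by blast
  ultimately have "card S \<noteq> 0"
    using crossing by auto
  have "finite C"
    using assms(1) crossing by (intro finite_edges) auto
  then have "card C \<noteq> 0"
    using assms(5) by simp
  have "3 * card S \<le> card U - card S"
    using assms(3) by linarith
  then obtain T where T: "T \<subseteq> U - S" "card T = 3 * card S"
    and dense: "3 * card S * card C \<le> (card U - card S) * card {e\<in>C. e \<subseteq> S \<union> T}"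
    by (rule exists_subset_spanning_many_crossing_edges[OF assms(1,2) _ crossing])
  let ?F\<^sub>2 = "{e\<in>C. e \<subseteq> S \<union> T}"
  have "3 * card S * card C \<le> card U * card ?F\<^sub>2"
    using dense by (meson diff_le_self le_trans mult_le_mono1)
  moreover have "card (S \<union> T) = 4 * card S"
    using T \<open>finite S\<close> finite_subset[OF T(1)] assms(1) by (subst card_Un_disjoint) auto
  moreover have "subgraph (S \<union> T) ?F\<^sub>2 U F"
    using T assms(2,4) unfolding subgraph_def by blast
  moreover have "?F\<^sub>2 \<noteq> {}"
  proof
    assume "?F\<^sub>2 = {}"
    with \<open>3 * card S * card C \<le> card U * card ?F\<^sub>2\<close> show False
      using \<open>card S \<noteq> 0\<close> \<open>card C \<noteq> 0\<close> by simp
  qed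
  ultimately show ?thesis
    by (intro that) auto
qed

lemma dense_subgraph_near_saturated_vertices:
  assumes "finite U" and edges: "\<forall>e\<in>F. e \<subseteq> U \<and> card e = 2" and "F \<noteq> {}"
    and "S \<subseteq> U" "4 * card S \<le> card U"
    and "F' \<subseteq> F" "3 * card F' \<le> card F" "\<forall>e\<in>F - F'. e \<inter> S \<noteq> {}"
  obtains W F\<^sub>2 where "subgraph W F\<^sub>2 U F" "F\<^sub>2 \<noteq> {}"
    "card W = card S \<and> card F \<le> 3 * card F\<^sub>2 \<or>
     card W = 4 * card S \<and> card S * card F \<le> card U * card F\<^sub>2"
proof -
  define inside where "inside = {e\<in>F. e \<subseteq> S}"
  define crossing where "crossing = {e\<in>F. e \<inter> S \<noteq> {} \<and> \<not> e \<subseteq> S}"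
  have "finite F"
    using assms(1) edges by (intro finite_edges) auto
  then have "card F \<noteq> 0"
    using assms(3) by simp
  have "finite F'" "finite inside" "finite crossing"
    using assms(6) unfolding inside_def crossing_def by (auto intro: finite_subset[OF _ \<open>finite F\<close>])
  moreover have "F \<subseteq> F' \<union> inside \<union> crossing"
    using assms(8) unfolding inside_def crossing_def by blast
  ultimately have "card F \<le> card (F' \<union> inside \<union> crossing)"
    by (intro card_mono) auto
  then have "card F \<le> card F' + card inside + card crossing"
    using card_Un_le[of "F' \<union> inside" crossing] card_Un_le[of F' inside] by linarith
  then consider "card F \<le> 3 * card inside" | "card F \<le> 3 * card crossing"
    using assms(7) by linarith
  then show ?thesis
  proof cases
    case 1
    moreover have "subgraph S inside U F"
      using assms(4) unfolding subgraph_def inside_def by blast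
    moreover have "inside \<noteq> {}"
      using 1 \<open>card F \<noteq> 0\<close> by auto
    ultimately show ?thesis
      by (intro that) auto
  next
    case 2
    have "crossing \<subseteq> F"
      unfolding crossing_def by blast
    moreover have "crossing \<noteq> {}"
      using 2 \<open>card F \<noteq> 0\<close> by auto
    moreover have "\<forall>e\<in>crossing. e \<subseteq> U \<and> card e = 2 \<and> e \<inter> S \<noteq> {} \<and> \<not> e \<subseteq> S"
      using edges unfolding crossing_def by blast
    ultimately obtain W F\<^sub>2 where W: "subgraph W F\<^sub>2 U F" "F\<^sub>2 \<noteq> {}" "card W = 4 * card S"
      and dense: "3 * card S * card crossing \<le> card U * card F\<^sub>2"
      by (rule dense_subgraph_from_crossing_edges[OF assms(1,4,5)])
    have "card S * card F \<le> 3 * card S * card crossing"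
      using 2 by simp
    with dense have "card S * card F \<le> card U * card F\<^sub>2"
      by linarith
    with W show ?thesis
      by (intro that) auto
  qed
qed

section \<open>Inequalities between powers\<close>

lemma powr_one_over_le:
  fixes a c u :: real
  assumes "0 \<le> c" "0 \<le> u" "0 < a" "c \<le> u powr a"
  shows "c powr (1 / a) \<le> u"
proof -
  have "c powr (1 / a) \<le> (u powr a) powr (1 / a)"
    using assms by (intro powr_mono2) auto
  also have "\<dots> = u"
    using assms(2,3) by (simp add: powr_powr)
  finally show ?thesis .
qed

lemma less_of_powr_add_le_powr:
  fixes b t L :: real
  assumes "0 < t" "1 < b" "0 < L" "b powr (1 + t) \<le> L powr t"
  shows "b < L"
proof (rule ccontr)
  assume "\<not> b < L"
  then have "L powr t \<le> b powr t"
    using assms(1,3) by (intro powr_mono2) auto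
  also have "\<dots> < b powr (1 + t)"
    using assms(1,2) by (intro powr_less_mono) auto
  finally show False
    using assms(4) by simp
qed

lemma density_of_subgraph_on_fewer_vertices:
  fixes c L s u m m\<^sub>2 :: real
  assumes "0 \<le> t" "3 \<le> L" "0 \<le> c" "0 \<le> s" "L * s \<le> u"
    and "c * u powr (1 + t) \<le> m" "m \<le> 3 * m\<^sub>2"
  shows "c * s powr (1 + t) \<le> m\<^sub>2"
proof -
  have "3 \<le> L powr (1 + t)"
    using assms(1,2) powr_mono[of 1 "1 + t" L] by simp
  then have "3 * s powr (1 + t) \<le> L powr (1 + t) * s powr (1 + t)"
    by (rule mult_right_mono) simp
  also have "\<dots> = (L * s) powr (1 + t)"
    by (simp add: powr_mult)
  also have "\<dots> \<le> u powr (1 + t)"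
    using assms by (intro powr_mono2) auto
  finally have "c * (3 * s powr (1 + t)) \<le> c * u powr (1 + t)"
    using assms(3) by (rule mult_left_mono)
  then show ?thesis
    using assms(6,7) by linarith
qed

lemma density_of_subgraph_on_four_times_vertices:
  fixes c L s u m m\<^sub>2 :: real
  assumes "0 \<le> t" "0 < L" "4 powr (1 + t) \<le> L powr t" "0 \<le> c" "0 \<le> s" "0 < u" "L * s \<le> u"
    and "c * u powr (1 + t) \<le> m" "s * m \<le> u * m\<^sub>2"
  shows "c * (4 * s) powr (1 + t) \<le> m\<^sub>2"
proof -
  have "(4 * s) powr (1 + t) = s * (4 powr (1 + t) * s powr t)"
    using assms(5) by (simp add: powr_mult powr_add)
  also have "\<dots> \<le> s * (L powr t * s powr t)"
    using assms(3,5) by (intro mult_left_mono mult_right_mono) auto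
  also have "\<dots> = s * (L * s) powr t"
    by (simp add: powr_mult)
  also have "\<dots> \<le> s * u powr t"
    using assms by (intro mult_left_mono powr_mono2) auto
  finally have "c * (4 * s) powr (1 + t) * u \<le> c * (s * u powr t) * u"
    using assms(4,6) by (intro mult_right_mono mult_left_mono) auto
  also have "\<dots> = s * (c * u powr (1 + t))"
    using assms(6) by (simp add: powr_add)
  also have "\<dots> \<le> u * m\<^sub>2"
    using assms(5,8,9) by (meson mult_left_mono order_trans)
  finally show ?thesis
    using assms(6) by (simp add: mult.commute)
qed

lemma density_of_shrunk_subgraph:
  fixes c L t :: real and s u w m m\<^sub>2 :: nat
  assumes "0 \<le> t" "4 \<le> L" "4 powr (1 + t) \<le> L powr t" "0 \<le> c" "L * real s < real u"
    and "c * real u powr (1 + t) \<le> real m"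
    and "w = s \<and> m \<le> 3 * m\<^sub>2 \<or> w = 4 * s \<and> s * m \<le> u * m\<^sub>2"
  shows "c * real w powr (1 + t) \<le> real m\<^sub>2"
  using assms(7)
proof (elim disjE conjE)
  assume "w = s" "m \<le> 3 * m\<^sub>2"
  then have "real m \<le> 3 * real m\<^sub>2"
    by linarith
  then show ?thesis
    unfolding \<open>w = s\<close> using assms(2) by (intro density_of_subgraph_on_fewer_vertices[OF assms(1) _ assms(4) _
          less_imp_le[OF assms(5)] assms(6)]) auto
next
  assume "w = 4 * s" "s * m \<le> u * m\<^sub>2"
  then have "real s * real m \<le> real u * real m\<^sub>2"
    by (metis of_nat_le_iff of_nat_mult)
  moreover have "0 < real u"
    using assms(2,5) mult_nonneg_nonneg[of L "real s"] by linarith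
  ultimately have "c * (4 * real s) powr (1 + t) \<le> real m\<^sub>2"
    using assms(2) by (intro density_of_subgraph_on_four_times_vertices[OF assms(1) _ assms(3,4)
          _ _ less_imp_le[OF assms(5)] assms(6)]) auto
  with \<open>w = 4 * s\<close> show ?thesis
    by simp
qed

lemma card_vertices_ge_of_edge_density:
  fixes c t :: real
  assumes "finite V" "\<forall>e\<in>E. e \<subseteq> V \<and> card e = 2" "E \<noteq> {}" "0 \<le> c" "t < 1"
    and "c * real (card V) powr (1 + t) \<le> real (card E)"
  shows "c powr (1 / (1 - t)) \<le> real (card V)"
proof -
  let ?v = "real (card V)"
  have "0 < ?v"
    using two_le_card_vertices[OF assms(1-3)] by simp
  have "c * ?v powr (1 + t) \<le> ?v ^ 2"
    using assms(6) card_edges_le_square[OF assms(1,2)] by (metis of_nat_le_iff of_nat_power order_trans)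
  also have "\<dots> = ?v powr (1 - t) * ?v powr (1 + t)"
    using \<open>0 < ?v\<close> by (simp add: powr_add[symmetric] powr_numeral)
  finally have "c \<le> ?v powr (1 - t)"
    using \<open>0 < ?v\<close> by simp
  then show ?thesis
    using assms(4,5) by (intro powr_one_over_le) auto
qed

section \<open>The density increment induction\<close>

definition dense_bounded_degree :: "real \<Rightarrow> real \<Rightarrow> 'a set \<Rightarrow> 'a set set \<Rightarrow> bool" where
  "dense_bounded_degree \<alpha> K V E \<longleftrightarrow>
     1/3 * real (card V) powr (1 + \<alpha>) \<le> real (card E) \<and>
     real (max_degree V E) \<le> K * real (card V) powr \<alpha>"

lemma denser_smaller_subgraph_of_sparse_maximal:
  fixes \<alpha> t L c :: real
  assumes "0 < t" "t \<le> \<alpha>" "0 < L" "4 powr (1 + t) \<le> L powr t"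
    and "finite U" and edges: "\<forall>e\<in>F. e \<subseteq> U \<and> card e = 2" and "F \<noteq> {}"
    and "real (card U) powr (\<alpha> - t) \<le> c" "c * real (card U) powr (1 + t) \<le> real (card F)"
    and "F' \<subseteq> F"
    and saturated: "\<forall>e\<in>F - F'. \<exists>v\<in>e. 4/3 * L * real (card U) powr \<alpha> < real (degree F' v) + 1"
    and sparse: "3 * real (card F') < real (card U) powr (1 + \<alpha>)"
  obtains W F\<^sub>2 where "subgraph W F\<^sub>2 U F" "F\<^sub>2 \<noteq> {}" "card W < card U"
    "real (card W) powr (\<alpha> - t) \<le> c" "c * real (card W) powr (1 + t) \<le> real (card F\<^sub>2)"
proof -
  let ?u = "real (card U)"
  define S where "S = {v\<in>U. 4/3 * L * ?u powr \<alpha> - 1 \<le> real (degree F' v)}"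
  have "4 < L"
    using less_of_powr_add_le_powr assms(1,3,4) by simp
  have "2 \<le> card U"
    by (rule two_le_card_vertices[OF assms(5-7)])
  then have "1 \<le> ?u powr (\<alpha> - t)"
    using assms(2) by (simp add: ge_one_powr_ge_zero)
  then have "1 \<le> c"
    using assms(8) by linarith
  have "\<forall>e\<in>F'. e \<subseteq> U \<and> card e = 2"
    using edges assms(10) by blast
  then have "L * real (card S) < ?u"
    unfolding S_def using \<open>2 \<le> card U\<close> \<open>4 < L\<close> assms(1,2)
    by (intro few_saturated_vertices[OF assms(5) _ _ _ _ sparse]) auto
  moreover have "4 * real (card S) \<le> L * real (card S)"
    using \<open>4 < L\<close> by (intro mult_right_mono) auto
  ultimately have "4 * card S < card U"
    by linarith
  have hit: "\<forall>e\<in>F - F'. e \<inter> S \<noteq> {}"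
  proof
    fix e assume "e \<in> F - F'"
    then obtain v where "v \<in> e" "4/3 * L * ?u powr \<alpha> < real (degree F' v) + 1"
      using saturated by blast
    moreover have "e \<subseteq> U"
      using edges \<open>e \<in> F - F'\<close> by blast
    ultimately show "e \<inter> S \<noteq> {}"
      unfolding S_def by auto
  qed
  have "?u powr (1 + \<alpha>) = ?u powr (\<alpha> - t) * ?u powr (1 + t)"
    by (simp add: powr_add[symmetric] add.commute)
  also have "\<dots> \<le> real (card F)"
    using assms(8,9) by (meson order_trans mult_right_mono powr_ge_zero)
  finally have "3 * card F' \<le> card F"
    using sparse by linarith
  moreover have "S \<subseteq> U"
    unfolding S_def by blast
  ultimately obtain W F\<^sub>2 where W: "subgraph W F\<^sub>2 U F" "F\<^sub>2 \<noteq> {}"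
    and shrunk: "card W = card S \<and> card F \<le> 3 * card F\<^sub>2 \<or>
      card W = 4 * card S \<and> card S * card F \<le> card U * card F\<^sub>2"
    using dense_subgraph_near_saturated_vertices[OF assms(5-7) _ _ assms(10) _ hit]
      \<open>4 * card S < card U\<close> by (metis less_imp_le)
  have "card W < card U"
    using shrunk \<open>4 * card S < card U\<close> by linarith
  then have "real (card W) powr (\<alpha> - t) \<le> ?u powr (\<alpha> - t)"
    using assms(2) by (intro powr_mono2) auto
  moreover have "c * real (card W) powr (1 + t) \<le> real (card F\<^sub>2)"
    using \<open>1 \<le> c\<close> \<open>4 < L\<close> assms(1)
    by (intro density_of_shrunk_subgraph[OF _ _ assms(4) _ \<open>L * real (card S) < ?u\<close> assms(9) shrunk])
      auto
  ultimately show ?thesis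
    using that W \<open>card W < card U\<close> assms(8) by auto
qed

lemma exists_dense_bounded_degree_subgraph:
  fixes \<alpha> t L c :: real
  assumes "0 < t" "t < 1" "t \<le> \<alpha>" "0 < L" "4 powr (1 + t) \<le> L powr t"
  shows "finite U \<Longrightarrow> \<forall>e\<in>F. e \<subseteq> U \<and> card e = 2 \<Longrightarrow> F \<noteq> {} \<Longrightarrow>
    real (card U) powr (\<alpha> - t) \<le> c \<Longrightarrow> c * real (card U) powr (1 + t) \<le> real (card F) \<Longrightarrow>
    \<exists>V' E'. subgraph V' E' U F \<and> c powr (1 / (1 - t)) \<le> real (card V') \<and>
      dense_bounded_degree \<alpha> (4/3 * L) V' E'"
proof (induction "card U" arbitrary: U F rule: less_induct)
  case less
  let ?u = "real (card U)"
  define D where "D = 4/3 * L * ?u powr \<alpha>"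
  have "finite F"
    using less.prems(1,2) by (intro finite_edges) auto
  moreover have "0 \<le> D"
    using assms(4) unfolding D_def by simp
  ultimately obtain F' where F': "F' \<subseteq> F" "\<forall>v. real (degree F' v) \<le> D"
    and saturated: "\<forall>e\<in>F - F'. \<exists>v\<in>e. D < real (degree F' v) + 1"
    by (rule exists_maximal_degree_bounded_subset)
  show ?case
  proof (cases "?u powr (1 + \<alpha>) \<le> 3 * real (card F')")
    case True
    have "1 \<le> ?u"
      using two_le_card_vertices[OF less.prems(1-3)] by simp
    then have "1 \<le> ?u powr (\<alpha> - t)"
      using assms(3) by (simp add: ge_one_powr_ge_zero)
    then have "0 \<le> c"
      using less.prems(4) by linarith
    then have "c powr (1 / (1 - t)) \<le> ?u"
      by (rule card_vertices_ge_of_edge_density[OF less.prems(1-3) _ assms(2) less.prems(5)])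
    moreover have "subgraph U F' U F"
      using F'(1) less.prems(2) unfolding subgraph_def by blast
    moreover have "real (max_degree U F') \<le> D"
      using F'(2) \<open>0 \<le> D\<close> less.prems(1) by (intro max_degree_le) auto
    then have "dense_bounded_degree \<alpha> (4/3 * L) U F'"
      using True unfolding dense_bounded_degree_def D_def by simp
    ultimately show ?thesis
      by blast
  next
    case False
    obtain W F\<^sub>2 where W: "subgraph W F\<^sub>2 U F" "F\<^sub>2 \<noteq> {}" "card W < card U"
      "real (card W) powr (\<alpha> - t) \<le> c" "c * real (card W) powr (1 + t) \<le> real (card F\<^sub>2)"
      by (rule denser_smaller_subgraph_of_sparse_maximal[OF assms(1,3-5) less.prems F'(1)
            saturated[unfolded D_def]]) (use False in linarith)
    moreover have "finite W" "\<forall>e\<in>F\<^sub>2. e \<subseteq> W \<and> card e = 2"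
      using W(1) finite_subset[of W U] less.prems(1,2) unfolding subgraph_def by blast+
    ultimately obtain V' E' where "subgraph V' E' W F\<^sub>2" "c powr (1 / (1 - t)) \<le> real (card V')"
      "dense_bounded_degree \<alpha> (4/3 * L) V' E'"
      using less.hyps by blast
    with W(1) show ?thesis
      using subgraph_trans by blast
  qed
qed

lemma exponent_choice:
  fixes \<alpha> t :: real
  assumes "0 < \<alpha>" "\<alpha> < 1" "t = 2 * \<alpha>^2 / (1 + \<alpha>^2)"
  shows "0 < t" "t < 1" "t \<le> \<alpha>" "(\<alpha> - t) / (1 - t) = \<alpha> * (1 - \<alpha>) / (1 + \<alpha>)"
    "4 powr (1 + t) \<le> (15 * 2 powr (1 / \<alpha>^2)) powr t"
proof -
  have "0 < \<alpha>^2" "\<alpha>^2 < 1"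
    using assms(1,2) by (simp_all add: power_less_one_iff)
  moreover have "0 < 1 + \<alpha>^2"
    by (simp add: add_pos_nonneg)
  ultimately show "0 < t" "t < 1"
    unfolding assms(3) by (simp_all add: divide_less_eq)
  have gap: "\<alpha> - t = \<alpha> * (1 - \<alpha>)^2 / (1 + \<alpha>^2)"
    and co_t: "1 - t = (1 - \<alpha>) * (1 + \<alpha>) / (1 + \<alpha>^2)"
    using \<open>0 < 1 + \<alpha>^2\<close> unfolding assms(3) by (simp_all add: field_simps power2_eq_square)
  have "0 \<le> \<alpha> * (1 - \<alpha>)^2 / (1 + \<alpha>^2)"
    using assms(1) \<open>0 < 1 + \<alpha>^2\<close> by simp
  then show "t \<le> \<alpha>"
    using gap by linarith
  show "(\<alpha> - t) / (1 - t) = \<alpha> * (1 - \<alpha>) / (1 + \<alpha>)"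
    unfolding gap co_t using assms(1,2) \<open>0 < 1 + \<alpha>^2\<close> by (simp add: power2_eq_square)
  have "1 / \<alpha>^2 * t = 2 - t"
    using \<open>0 < \<alpha>^2\<close> \<open>0 < 1 + \<alpha>^2\<close> unfolding assms(3) by (simp add: field_simps)
  then have "(2 powr (1 / \<alpha>^2)) powr t = 2 powr (2 - t)"
    by (simp add: powr_powr)
  then have "(15 * 2 powr (1 / \<alpha>^2)) powr t = 15 powr t * 2 powr (2 - t)"
    by (simp add: powr_mult)
  moreover have "4 powr (1 + t) = 8 powr t * 2 powr (2 - t)"
    using powr_mult[of 4 2 t] by (simp add: powr_add powr_diff)
  moreover have "8 powr t \<le> 15 powr t"
    using \<open>0 < t\<close> by (intro powr_mono2) auto
  ultimately show "4 powr (1 + t) \<le> (15 * 2 powr (1 / \<alpha>^2)) powr t"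
    by simp
qed

lemma dense_bounded_degree_subgraph_of_dense_graph:
  fixes \<alpha> :: real
  assumes "0 < \<alpha>" "\<alpha> < 1" "simple_graph V E" "V \<noteq> {}"
    and "real (card V) powr (1 + \<alpha>) \<le> real (card E)"
  shows "\<exists>V' E'. subgraph V' E' V E \<and>
    real (card V) powr (\<alpha> * (1 - \<alpha>) / (1 + \<alpha>)) \<le> real (card V') \<and>
    dense_bounded_degree \<alpha> (10 * 2 powr (1 / \<alpha>^2 + 1)) V' E'"
proof -
  let ?n = "real (card V)"
  define t where "t = 2 * \<alpha>^2 / (1 + \<alpha>^2)"
  define L where "L = 15 * 2 powr (1 / \<alpha>^2)"
  note t = exponent_choice[OF assms(1,2) t_def, folded L_def]
  have "finite V" "\<forall>e\<in>E. e \<subseteq> V \<and> card e = 2"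
    using assms(3) unfolding simple_graph_def by auto
  have "1 \<le> ?n powr (1 + \<alpha>)"
    using assms(1,4) \<open>finite V\<close> by (simp add: Suc_le_eq card_gt_0_iff ge_one_powr_ge_zero)
  then have "E \<noteq> {}"
    using assms(5) by auto
  moreover have "?n powr (\<alpha> - t) * ?n powr (1 + t) \<le> real (card E)"
    using assms(5) by (simp add: powr_add[symmetric] add.commute)
  moreover have "0 < L"
    unfolding L_def by simp
  ultimately obtain V' E' where "subgraph V' E' V E"
    "(?n powr (\<alpha> - t)) powr (1 / (1 - t)) \<le> real (card V')"
    "dense_bounded_degree \<alpha> (4/3 * L) V' E'"
    using exists_dense_bounded_degree_subgraph[OF t(1-3) \<open>0 < L\<close> t(5) \<open>finite V\<close>
        \<open>\<forall>e\<in>E. e \<subseteq> V \<and> card e = 2\<close>] by blast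
  moreover have size: "(?n powr (\<alpha> - t)) powr (1 / (1 - t)) = ?n powr (\<alpha> * (1 - \<alpha>) / (1 + \<alpha>))"
    using t(4) by (simp add: powr_powr)
  moreover have K: "4/3 * L = 10 * 2 powr (1 / \<alpha>^2 + 1)"
    unfolding L_def by (simp add: powr_add)
  ultimately show ?thesis
    unfolding size K by blast
qed

theorem lemma2p9:
  fixes \<alpha> :: real
  assumes "0 < \<alpha>" and "\<alpha> < 1"
  shows "\<exists>N::nat. \<forall>n\<ge>N. \<forall>(V::nat set) E.
           simple_graph V E \<longrightarrow> card V = n \<longrightarrow> real (card E) \<ge> real n powr (1 + \<alpha>) \<longrightarrow>
           (\<exists>V' E'. subgraph V' E' V E \<and>
              real (card V') \<ge> real n powr (\<alpha> * (1 - \<alpha>) / (1 + \<alpha>)) \<and>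
              real (card E') \<ge> 1/3 * real (card V') powr (1 + \<alpha>) \<and>
              real (max_degree V' E') \<le> 10 * 2 powr (1 / \<alpha>^2 + 1) * real (card V') powr \<alpha>)"
proof (intro exI[of _ 1] allI impI)
  fix n :: nat and V :: "nat set" and E
  assume "1 \<le> n" "simple_graph V E" "card V = n" "real n powr (1 + \<alpha>) \<le> real (card E)"
  then have "V \<noteq> {}"
    by auto
  with assms \<open>simple_graph V E\<close> \<open>card V = n\<close> \<open>real n powr (1 + \<alpha>) \<le> real (card E)\<close>
  show "\<exists>V' E'. subgraph V' E' V E \<and>
      real (card V') \<ge> real n powr (\<alpha> * (1 - \<alpha>) / (1 + \<alpha>)) \<and>
      real (card E') \<ge> 1/3 * real (card V') powr (1 + \<alpha>) \<and>
      real (max_degree V' E') \<le> 10 * 2 powr (1 / \<alpha>^2 + 1) * real (card V') powr \<alpha>"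
    using dense_bounded_degree_subgraph_of_dense_graph unfolding dense_bounded_degree_def by blast
qed

end
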